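(* Let $H:\mathbb{R}^{2m}\to\mathbb{R}$ be smooth and let $\bar\nabla H$ be any discrete gradient of $H$. Let $\theta$ be a real $2m\times 2m$ matrix of the form $$\theta=\begin{pmatrix}\delta&-\sigma\\ \rho&\delta^T\end{pmatrix},$$ where $\delta,\sigma,\rho$ are $m\times m$ matrices with $\rho^T=-\rho$ and $\sigma^T=-\sigma$, and where $\lim_{h\to0}\theta/h=1$. Then the numerical scheme $$y_{n+1}-y_n=\theta\,S\,\bar\nabla H(y_n,y_{n+1}),\qquad S=\begin{pmatrix}0&1\\-1&0\end{pmatrix},$$ preserves the energy integral exactly: $H(x_{n+1},p_{n+1})=H(x_n,p_n)$.
   Context: Points are written $y=(x,p)\in\mathbb{R}^{2m}$, $y_n=(x_n,p_n)$. $h$ is the time step and $1$ is the identity matrix. A discrete gradient of $H$ is an $\mathbb{R}^{2m}$-valued function $\bar\nabla H(y_n,y_{n+1})$ with components $\Delta H/\Delta y^k$ such that: - $\sum_{k}\frac{\Delta H}{\Delta y^k}(y^k_{n+1}-y^k_n)=H(y_{n+1})-H(y_n)$; - $\bar\nabla H(y,y)=(H_x,H_p)$. *)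

theory Defs
  imports "HOL-Analysis.Analysis"
begin

text \<open>Points of R^(2m) are vectors indexed by the disjoint sum 'm + 'm:
  the first block (Inl i) holds the positions x, the second (Inr i) the momenta p.\<close>

text \<open>Smoothness (C-infinity): f is everywhere Frechet differentiable and every
  directional derivative x |-> f' x v is again smooth (coinductively: derivatives of all orders exist).\<close>
coinductive smooth_fun :: "('a::real_normed_vector \<Rightarrow> real) \<Rightarrow> bool" where
  "(\<forall>x. (f has_derivative f' x) (at x)) \<Longrightarrow> (\<forall>v. smooth_fun (\<lambda>x. f' x v)) \<Longrightarrow> smooth_fun f"

definition block_mat ::
  "real^'m^'m \<Rightarrow> real^'m^'m \<Rightarrow> real^'m^'m \<Rightarrow> real^'m^'m \<Rightarrow> real^('m + 'm)^('m + 'm)" where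
  "block_mat A B C D = (\<chi> i j. case i of
      Inl a \<Rightarrow> (case j of Inl b \<Rightarrow> A $ a $ b | Inr b \<Rightarrow> B $ a $ b)
    | Inr a \<Rightarrow> (case j of Inl b \<Rightarrow> C $ a $ b | Inr b \<Rightarrow> D $ a $ b))"

definition symp_S :: "real^('m::finite + 'm)^('m + 'm)" where
  "symp_S = block_mat 0 (mat 1) (- mat 1) 0"

definition discrete_gradient ::
  "(real^'n \<Rightarrow> real) \<Rightarrow> (real^'n \<Rightarrow> real^'n \<Rightarrow> real^'n) \<Rightarrow> bool" where
  "discrete_gradient H dg \<longleftrightarrow>
     (\<forall>y y'. dg y y' \<bullet> (y' - y) = H y' - H y) \<and>
     (\<forall>y. (H has_derivative (\<lambda>v. dg y y \<bullet> v)) (at y))"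

end

theory Submission
  imports Defs
begin

text \<open>The matrix \<open>\<theta> S\<close> is skew-symmetric for every step size, and a skew-symmetric matrix
  has vanishing quadratic form. By the defining identity of a discrete gradient,
  \<open>H(y\<^sub>n\<^sub>+\<^sub>1) - H(y\<^sub>n) = \<nabla>H \<bullet> (y\<^sub>n\<^sub>+\<^sub>1 - y\<^sub>n) = \<nabla>H \<bullet> (\<theta> S \<nabla>H) = 0\<close>.\<close>

lemma inner_mult_vec_skew_eq_0:
  fixes M :: "real^'n^'n"
  assumes "transpose M = - M"
  shows "x \<bullet> (M *v x) = 0"
proof -
  have "x \<bullet> (M *v x) = (transpose M *v x) \<bullet> x"
    by (simp add: dot_lmul_matrix)
  also have "transpose M *v x = - (M *v x)"
    using assms by (simp add: matrix_vector_mult_def vec_eq_iff sum_negf)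
  finally have "x \<bullet> (M *v x) = - (x \<bullet> (M *v x))"
    by (simp add: inner_commute)
  then show ?thesis by simp
qed

lemma discrete_gradient_skew_step_conserves:
  assumes "discrete_gradient H dg"
    and "transpose M = - M"
    and "y' - y = M *v dg y y'"
  shows "H y' = H y"
proof -
  have "H y' - H y = dg y y' \<bullet> (y' - y)"
    using assms(1) unfolding discrete_gradient_def by simp
  also have "\<dots> = 0"
    using assms(3) inner_mult_vec_skew_eq_0[OF assms(2)] by simp
  finally show ?thesis by simp
qed

lemma sum_UNIV_sum_type:
  fixes f :: "('a::finite + 'a) \<Rightarrow> 'b::comm_monoid_add"
  shows "sum f UNIV = (\<Sum>a\<in>UNIV. f (Inl a)) + (\<Sum>a\<in>UNIV. f (Inr a))"
  by (subst UNIV_sum, subst sum.union_disjoint) (auto simp: sum.reindex)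

lemma transpose_block_mat:
  "transpose (block_mat A B C D) =
     block_mat (transpose A) (transpose C) (transpose B) (transpose D)"
  by (simp add: vec_eq_iff transpose_def block_mat_def split: sum.split)

lemma transpose_uminus: "transpose (- A) = - transpose A"
  by (simp add: vec_eq_iff transpose_def)

lemma uminus_block_mat:
  "- block_mat A B C D = block_mat (- A) (- B) (- C) (- D)"
  by (simp add: vec_eq_iff block_mat_def split: sum.split)

lemma block_mat_mult_symp_S:
  "block_mat A B C D ** symp_S = block_mat (- B) A (- D) C"
  by (simp add: vec_eq_iff matrix_matrix_mult_def symp_S_def block_mat_def sum_UNIV_sum_type
      mat_def if_distrib cong: if_cong split: sum.split)

lemma block_mat_mult_symp_S_skew:
  assumes "transpose \<rho> = - \<rho>" and "transpose \<sigma> = - \<sigma>"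
  shows "transpose (block_mat \<delta> (- \<sigma>) \<rho> (transpose \<delta>) ** symp_S)
           = - (block_mat \<delta> (- \<sigma>) \<rho> (transpose \<delta>) ** symp_S)"
  using assms by (simp add: block_mat_mult_symp_S transpose_block_mat uminus_block_mat
      transpose_uminus)

theorem lemma6p5:
  fixes H :: "real^('m::finite + 'm) \<Rightarrow> real"
    and dg :: "real^('m + 'm) \<Rightarrow> real^('m + 'm) \<Rightarrow> real^('m + 'm)"
    and \<delta> \<sigma> \<rho> :: "real \<Rightarrow> real^'m^'m"
    and h :: real
    and y :: "nat \<Rightarrow> real^('m + 'm)"
  assumes "smooth_fun H"
    and "discrete_gradient H dg"
    and "\<And>t. transpose (\<rho> t) = - \<rho> t"
    and "\<And>t. transpose (\<sigma> t) = - \<sigma> t"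
    and "((\<lambda>t. (1 / t) *\<^sub>R block_mat (\<delta> t) (- \<sigma> t) (\<rho> t) (transpose (\<delta> t)))
            \<longlongrightarrow> mat 1) (at 0)"
    and "\<And>n. y (Suc n) - y n
            = (block_mat (\<delta> h) (- \<sigma> h) (\<rho> h) (transpose (\<delta> h)) ** symp_S) *v dg (y n) (y (Suc n))"
  shows "\<forall>n. H (y (Suc n)) = H (y n)"
  using discrete_gradient_skew_step_conserves[OF assms(2)
      block_mat_mult_symp_S_skew[OF assms(3,4)] assms(6)]
  by blast

end
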